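(* Consider the controlled network SIS system $\dot x=(-D-H(x)+B-XB)x$, with $B$ irreducible, where $H(x)=\operatorname{diag}(h_1(x_1),\dots,h_n(x_n))$ and each $h_i:[0,1]\to\mathbb{R}_{\ge0}$ is bounded, smooth, monotonically nondecreasing, with $h_i(0)=0$. Suppose $s(-D+B)\le 0$. Then $0_n$ is the unique equilibrium of the system in $\Xi_n$, and $\lim_{t\to\infty}x(t)=0_n$ for all $x(0)\in\Xi_n$.
   Context: $n\ge2$, $D=\operatorname{diag}(d_1,\dots,d_n)$ with $d_i>0$, $B=(b_{ij})\in\mathbb{R}^{n\times n}$ entrywise nonnegative, $X=\operatorname{diag}(x_1,\dots,x_n)$; componentwise $\dot x_i=-(d_i+h_i(x_i))x_i+(1-x_i)\sum_j b_{ij}x_j$. $B$ irreducible is equivalent to the associated directed graph being strongly connected. $\Xi_n=[0,1]^n$; trajectories starting in $\Xi_n$ remain in $\Xi_n$. $s(M)$ denotes the largest real part of the eigenvalues of a square matrix $M$. *)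

theory Defs
  imports "HOL-Analysis.Analysis"
begin

definition smooth_on :: "real set \<Rightarrow> (real \<Rightarrow> real) \<Rightarrow> bool" where
  "smooth_on S f \<longleftrightarrow> (\<exists>F::nat \<Rightarrow> real \<Rightarrow> real. (\<forall>x\<in>S. F 0 x = f x) \<and>
     (\<forall>k. \<forall>x\<in>S. (F k has_real_derivative F (Suc k) x) (at x within S)))"

definition diag_mat :: "real ^ 'n \<Rightarrow> real ^ 'n ^ 'n" where
  "diag_mat d = (\<chi> i j. if i = j then d $ i else 0)"

definition eigenvalues_c :: "real ^ 'n ^ 'n \<Rightarrow> complex set" where
  "eigenvalues_c M = {l. det (mat l - (\<chi> i j. complex_of_real (M $ i $ j))) = 0}"

definition spectral_abscissa :: "real ^ 'n ^ 'n \<Rightarrow> real" where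
  "spectral_abscissa M = Max (Re ` eigenvalues_c M)"

definition irreducible_mat :: "real ^ 'n ^ 'n \<Rightarrow> bool" where
  "irreducible_mat B \<longleftrightarrow> (\<forall>i j. (i, j) \<in> {(i, j). B $ i $ j \<noteq> 0}\<^sup>+)"

definition Xi :: "(real ^ 'n) set" where
  "Xi = {x. \<forall>i. 0 \<le> x $ i \<and> x $ i \<le> 1}"

definition sis_field :: "real ^ 'n \<Rightarrow> ('n \<Rightarrow> real \<Rightarrow> real) \<Rightarrow> real ^ 'n ^ 'n \<Rightarrow> real ^ 'n \<Rightarrow> real ^ 'n" where
  "sis_field d h B x = (\<chi> i. - (d $ i + h i (x $ i)) * x $ i + (1 - x $ i) * (\<Sum>j\<in>UNIV. B $ i $ j * x $ j))"

end

theory Submission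
  imports Defs "HOL-Computational_Algebra.Polynomial"
begin

text \<open>The matrix \<open>-D + B\<close> is Metzler, and \<open>s(-D + B) \<le> 0\<close> yields, via a Brouwer fixed point of
  the normalised map \<open>u \<mapsto> u (-D + B + cI)\<close> on the probability vectors, a nonnegative left vector
  \<open>v\<close> with \<open>v B \<le> v D\<close>; irreducibility of \<open>B\<close> forces \<open>v > 0\<close>. On \<open>\<Xi>\<^sub>n\<close> the linear function
  \<open>V(x) = v x\<close> then satisfies \<open>V' \<le> - \<Sum>\<^sub>i v\<^sub>i x\<^sub>i (B x)\<^sub>i\<close>, which forces every equilibrium in
  \<open>\<Xi>\<^sub>n\<close> to be \<open>0\<close>. Along a trajectory \<open>V\<close> decreases and is bounded below, and the products
  \<open>x\<^sub>i (B x)\<^sub>i\<close> have derivatives bounded below, so by a Barbalat-type argument they tend to \<open>0\<close>;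
  then \<open>x\<^sub>i' \<le> - d\<^sub>i x\<^sub>i + (B x)\<^sub>i\<close> drives each \<open>x\<^sub>i\<close> to \<open>0\<close>.\<close>

lemma det_of_real_matrix:
  fixes A :: "real^'n^'n"
  shows "det (\<chi> i j. (of_real (A$i$j) :: 'a::{real_algebra_1,comm_ring_1})) = of_real (det A)"
  unfolding det_def by (simp add: of_real_sum of_real_mult)

lemma poly_det:
  fixes P :: "'a::comm_ring_1 poly^'n^'n"
  shows "poly (det P) x = det (\<chi> i j. poly (P$i$j) x)"
  unfolding det_def by (simp add: poly_sum poly_prod)

lemma det_eq_0_iff_kernel:
  fixes A :: "'a::field^'n^'n"
  shows "det A = 0 \<longleftrightarrow> (\<exists>x. x \<noteq> 0 \<and> A *v x = 0)"
proof -
  have "det A = 0 \<longleftrightarrow> \<not> inj ((*v) A)"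
    using det_nz_iff_inj_gen[of "(*v) A"] by auto
  also have "\<dots> \<longleftrightarrow> (\<exists>x. x \<noteq> 0 \<and> A *v x = 0)"
  proof
    assume "\<not> inj ((*v) A)"
    then obtain x y where "x \<noteq> y" "A *v x = A *v y" unfolding inj_def by blast
    then show "\<exists>x. x \<noteq> 0 \<and> A *v x = 0"
      by (intro exI[of _ "x - y"]) (simp add: matrix_vector_mult_diff_distrib)
  next
    assume "\<exists>x. x \<noteq> 0 \<and> A *v x = 0"
    then show "\<not> inj ((*v) A)"
      unfolding inj_def by (metis matrix_vector_mult_0_right)
  qed
  finally show ?thesis .
qed

lemma eigenvalue_norm_le:
  fixes A :: "complex^'n^'n"
  assumes "det (mat l - A) = 0"
  shows "norm l \<le> (\<Sum>i\<in>UNIV. \<Sum>j\<in>UNIV. norm (A$i$j))"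
proof -
  obtain x where x: "x \<noteq> 0" "(mat l - A) *v x = 0"
    using assms det_eq_0_iff_kernel by blast
  obtain i where "Max (range (\<lambda>j. norm (x$j))) = norm (x$i)"
    using obtains_MAX[of "UNIV::'n set" "\<lambda>j. norm (x$j)"] by auto
  then have i: "norm (x$j) \<le> norm (x$i)" for j
    by (metis Max_ge finite finite_imageI rangeI)
  have "x$i \<noteq> 0"
  proof
    assume "x$i = 0"
    then have "x$j = 0" for j
      using i[of j] by simp
    with x(1) show False by (simp add: vec_eq_iff)
  qed
  have "l * x$i = (\<Sum>j\<in>UNIV. A$i$j * x$j)"
    using arg_cong[OF x(2), of "\<lambda>y. y $ i"]
    by (simp add: matrix_vector_mult_def mat_def left_diff_distrib sum_subtractf
        if_distrib[of "\<lambda>z. z * _"] sum.If_cases)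
  then have "norm l * norm (x$i) = norm (\<Sum>j\<in>UNIV. A$i$j * x$j)"
    by (simp add: norm_mult flip: \<open>l * x$i = _\<close>)
  also have "\<dots> \<le> (\<Sum>j\<in>UNIV. norm (A$i$j) * norm (x$i))"
    by (rule order_trans[OF norm_sum sum_mono]) (simp add: norm_mult mult_left_mono i)
  finally have "norm l * norm (x$i) \<le> (\<Sum>j\<in>UNIV. norm (A$i$j) * norm (x$i))" .
  then have "norm l \<le> (\<Sum>j\<in>UNIV. norm (A$i$j))"
    using \<open>x$i \<noteq> 0\<close> by (simp add: sum_distrib_right[symmetric])
  also have "\<dots> \<le> (\<Sum>i\<in>UNIV. \<Sum>j\<in>UNIV. norm (A$i$j))"
    by (rule member_le_sum) (auto intro: sum_nonneg)
  finally show ?thesis .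
qed

lemma finite_eigenvalues_c:
  fixes M :: "real^'n^'n"
  shows "finite (eigenvalues_c M)"
proof -
  define A where "A = (\<chi> i j. complex_of_real (M$i$j))"
  define P :: "complex poly^'n^'n" where "P = (\<chi> i j. [: - A$i$j, if i = j then 1 else 0 :])"
  have ev: "poly (det P) l = det (mat l - A)" for l
    unfolding poly_det P_def by (rule arg_cong[where f=det]) (simp add: vec_eq_iff mat_def)
  define b where "b = (\<Sum>i\<in>UNIV. \<Sum>j\<in>UNIV. norm (A$i$j))"
  text \<open>All eigenvalues lie in the disc of radius \<open>b\<close>, so the characteristic polynomial is nonzero.\<close>
  have "det (mat (of_real (b+1)) - A) \<noteq> 0"
  proof
    assume "det (mat (of_real (b+1)) - A) = 0"
    then have "norm (complex_of_real (b+1)) \<le> b"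
      unfolding b_def by (rule eigenvalue_norm_le)
    moreover have "b \<ge> 0" unfolding b_def by (auto intro!: sum_nonneg)
    ultimately show False by simp
  qed
  then have "det P \<noteq> 0" using ev by (metis poly_0)
  from poly_roots_finite[OF this] show ?thesis
    by (simp add: ev eigenvalues_c_def A_def)
qed

lemma mat_vector_mult: "mat c *v u = c *\<^sub>R (u :: real^'n)"
  by (simp add: vec_eq_iff matrix_vector_mult_def mat_def if_distrib[of "\<lambda>z. z * _"] sum.If_cases)

lemma vector_mat_mult: "u v* mat c = c *\<^sub>R (u :: real^'n)"
  by (simp add: vec_eq_iff vector_matrix_mult_def mat_def if_distrib[of "\<lambda>z. _ * z"] sum.If_cases mult.commute)

lemma left_eigenvalue_le_spectral_abscissa:
  fixes M :: "real^'n^'n"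
  assumes "u \<noteq> 0" and "u v* M = l *\<^sub>R u"
  shows "l \<le> spectral_abscissa M"
proof -
  have "(mat l - transpose M) *v u = 0"
    using assms(2) by (simp add: matrix_vector_mult_diff_rdistrib mat_vector_mult)
  moreover have "mat l - transpose M = transpose (mat l - M)"
    by (simp add: vec_eq_iff transpose_def mat_def)
  ultimately have "det (mat l - M) = 0"
    using assms(1) det_eq_0_iff_kernel[of "mat l - transpose M"] by auto
  moreover have "(\<chi> i j. complex_of_real ((mat l - M)$i$j))
      = mat (complex_of_real l) - (\<chi> i j. complex_of_real (M$i$j))"
    by (simp add: vec_eq_iff mat_def)
  ultimately have "complex_of_real l \<in> eigenvalues_c M"
    using det_of_real_matrix[where 'a=complex, of "mat l - M"] by (simp add: eigenvalues_c_def del: of_real_diff)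
  then show ?thesis
    unfolding spectral_abscissa_def using finite_eigenvalues_c
    by (metis Max_ge Re_complex_of_real finite_imageI imageI)
qed

definition prob_vectors :: "(real^'n) set" where
  "prob_vectors = {u. (\<forall>i. 0 \<le> u$i) \<and> (\<Sum>i\<in>UNIV. u$i) = 1}"

lemma compact_prob_vectors: "compact prob_vectors"
proof (rule compact_eq_bounded_closed[THEN iffD2], rule conjI)
  show "bounded (prob_vectors :: (real^'n) set)"
    unfolding bounded_iff
  proof (intro exI ballI)
    fix u :: "real^'n" assume "u \<in> prob_vectors"
    then have "(\<Sum>i\<in>UNIV. \<bar>u$i\<bar>) = 1" by (simp add: prob_vectors_def)
    then show "norm u \<le> 1" using norm_le_l1_cart[of u] by simp
  qed
  show "closed (prob_vectors :: (real^'n) set)"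
    unfolding prob_vectors_def
    by (intro closed_Collect_conj closed_Collect_all closed_Collect_le closed_Collect_eq continuous_intros)
qed

lemma convex_prob_vectors: "convex prob_vectors"
  unfolding convex_def prob_vectors_def
  by (auto simp: sum.distrib simp flip: sum_distrib_left)

lemma prob_vectors_nonempty: "prob_vectors \<noteq> {}"
proof -
  have "(\<chi> i. 1 / real CARD('n)) \<in> (prob_vectors :: (real^'n) set)"
    by (simp add: prob_vectors_def)
  then show ?thesis by blast
qed

lemma nonneg_matrix_left_eigenvector:
  fixes A :: "real^'n^'n"
  assumes nonneg: "\<And>i j. 0 \<le> A$i$j"
  obtains u \<sigma> where "u \<in> prob_vectors" and "u v* A = \<sigma> *\<^sub>R u"
proof -
  text \<open>The shift by the identity keeps the normalising sum \<open>\<sigma>\<close> away from \<open>0\<close> on \<open>prob_vectors\<close>.\<close>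
  define A' where "A' = A + mat 1"
  define \<sigma> where "\<sigma> u = (\<Sum>k\<in>UNIV. (u v* A')$k)" for u
  define f where "f u = (1 / \<sigma> u) *\<^sub>R (u v* A')" for u
  have ge: "u$k \<le> (u v* A')$k" if "u \<in> prob_vectors" for u k
  proof -
    have "0 \<le> (u v* A)$k"
      using that nonneg by (auto simp: vector_matrix_mult_def prob_vectors_def intro: sum_nonneg)
    then show ?thesis
      by (simp add: A'_def vector_matrix_mult_add_rdistrib vector_mat_mult)
  qed
  have \<sigma>_ge: "1 \<le> \<sigma> u" if "u \<in> prob_vectors" for u
    using sum_mono[of UNIV "\<lambda>k. u$k" "\<lambda>k. (u v* A')$k"] ge[OF that] that
    by (simp add: \<sigma>_def prob_vectors_def)
  have "f \<in> prob_vectors \<rightarrow> prob_vectors"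
  proof
    fix u :: "real^'n" assume u: "u \<in> prob_vectors"
    then have "0 \<le> (u v* A')$k" for k
      using ge[OF u, of k] by (auto simp: prob_vectors_def intro: order_trans)
    then show "f u \<in> prob_vectors"
      using \<sigma>_ge[OF u] by (simp add: prob_vectors_def f_def \<sigma>_def flip: sum_divide_distrib)
  qed
  moreover have "continuous_on prob_vectors f"
  proof -
    have "(\<Sum>k\<in>UNIV. \<Sum>i\<in>UNIV. u$i * A'$i$k) \<noteq> 0" if "u \<in> prob_vectors" for u
      using \<sigma>_ge[OF that] by (simp add: \<sigma>_def vector_matrix_mult_def)
    then show ?thesis
      unfolding f_def \<sigma>_def vector_matrix_mult_def by (intro continuous_intros) auto
  qed
  ultimately obtain u where u: "u \<in> prob_vectors" "f u = u"
    using brouwer[OF compact_prob_vectors convex_prob_vectors prob_vectors_nonempty] by blast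
  have "u v* A' = \<sigma> u *\<^sub>R f u"
    using \<sigma>_ge[OF u(1)] by (simp add: f_def)
  then have "u v* A = (\<sigma> u - 1) *\<^sub>R u"
    using u(2) by (simp add: A'_def vector_matrix_mult_add_rdistrib vector_mat_mult algebra_simps)
  with u(1) show thesis by (rule that)
qed

lemma metzler_left_subinvariant_vector:
  fixes M :: "real^'n^'n"
  assumes s: "spectral_abscissa M \<le> 0" and metzler: "\<And>i j. i \<noteq> j \<Longrightarrow> M$i$j \<ge> 0"
  obtains u where "u \<in> prob_vectors" and "\<And>k. (u v* M)$k \<le> 0"
proof -
  define c where "c = (\<Sum>i\<in>UNIV. \<bar>M$i$i\<bar>)"
  have diag_bound: "\<bar>M$k$k\<bar> \<le> c" for k
    unfolding c_def by (rule member_le_sum) auto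
  have "0 \<le> (M + mat c)$i$j" for i j
    using metzler[of i j] diag_bound[of i] abs_ge_minus_self[of "M$i$i"]
    by (cases "i = j") (auto simp: mat_def)
  then obtain u \<sigma> where u: "u \<in> prob_vectors" and "u v* (M + mat c) = \<sigma> *\<^sub>R u"
    using nonneg_matrix_left_eigenvector by blast
  then have eig: "u v* M = (\<sigma> - c) *\<^sub>R u"
    by (simp add: vector_matrix_mult_add_rdistrib vector_mat_mult algebra_simps)
  have "u \<noteq> 0"
    using u by (auto simp: prob_vectors_def)
  then have "\<sigma> - c \<le> 0"
    using left_eigenvalue_le_spectral_abscissa[OF _ eig] s by simp
  then have "(u v* M)$k \<le> 0" for k
    using u by (simp add: eig prob_vectors_def mult_nonpos_nonneg)
  with u show thesis by (rule that)
qed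

lemma irreducible_subinvariant_vector_pos:
  fixes B :: "real^'n^'n" and d u :: "real^'n"
  assumes B_nonneg: "\<And>i j. 0 \<le> B$i$j" and B_irred: "irreducible_mat B"
    and u: "u \<in> prob_vectors" and sub: "\<And>k. (u v* B)$k \<le> d$k * u$k"
  shows "0 < u$i"
proof -
  have u_nonneg: "0 \<le> u$i" for i
    using u by (simp add: prob_vectors_def)
  have predecessor: "u$a = 0" if "B$a$b \<noteq> 0" "u$b = 0" for a b
  proof -
    have "(\<Sum>i\<in>UNIV. u$i * B$i$b) \<le> 0"
      using sub[of b] that(2) by (simp add: vector_matrix_mult_def)
    then have "\<forall>i\<in>UNIV. u$i * B$i$b = 0"
      using B_nonneg u_nonneg by (intro sum_nonneg_eq_0_iff[THEN iffD1] order_antisym) (auto intro: sum_nonneg)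
    then show ?thesis using that(1) by (metis UNIV_I mult_eq_0_iff)
  qed
  have "u$a = 0" if "(a, b) \<in> {(i, j). B$i$j \<noteq> 0}\<^sup>+" "u$b = 0" for a b
    using that by (induction rule: converse_trancl_induct) (auto intro: predecessor)
  then have "u$i = 0 \<Longrightarrow> u$j = 0" for j
    using B_irred unfolding irreducible_mat_def by blast
  moreover have "u \<noteq> 0"
    using u by (auto simp: prob_vectors_def)
  ultimately show ?thesis
    using u_nonneg[of i] by (force simp: vec_eq_iff)
qed

lemma positive_left_subinvariant_vector:
  fixes B :: "real^'n^'n" and d :: "real^'n"
  assumes B_nonneg: "\<And>i j. 0 \<le> B$i$j" and B_irred: "irreducible_mat B"
    and s_le: "spectral_abscissa (- diag_mat d + B) \<le> 0"
  obtains v where "\<And>i. 0 < v$i" and "\<And>k. (v v* B)$k \<le> d$k * v$k"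
proof -
  have "(u v* (- diag_mat d + B))$k = (u v* B)$k - d$k * u$k" for u k
    by (simp add: vector_matrix_mult_def diag_mat_def sum_subtractf algebra_simps
        if_distrib[of "\<lambda>z. _ * z"] sum.If_cases flip: sum_negf)
  moreover have "0 \<le> (- diag_mat d + B)$i$j" if "i \<noteq> j" for i j
    using that B_nonneg by (simp add: diag_mat_def)
  ultimately obtain u where u: "u \<in> prob_vectors" and sub: "\<And>k. (u v* B)$k \<le> d$k * u$k"
    using metzler_left_subinvariant_vector[OF s_le] by (metis diff_le_0_iff_le)
  show thesis
    using irreducible_subinvariant_vector_pos[OF B_nonneg B_irred u sub] sub by (rule that)
qed

lemma increment_le_of_deriv_le:
  fixes g g' :: "real \<Rightarrow> real"
  assumes "0 \<le> s" "s \<le> t"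
    and deriv: "\<And>\<tau>. 0 \<le> \<tau> \<Longrightarrow> (g has_real_derivative g' \<tau>) (at \<tau> within {0..})"
    and bound: "\<And>\<tau>. s < \<tau> \<Longrightarrow> \<tau> < t \<Longrightarrow> g' \<tau> \<le> c"
  shows "g t - g s \<le> c * (t - s)"
proof (cases "s = t")
  case False
  then have "s < t" using assms(2) by simp
  have "(g has_derivative (\<lambda>h. g' \<tau> * h)) (at \<tau> within {s..t})" if "s \<le> \<tau>" "\<tau> \<le> t" for \<tau>
    using DERIV_subset[OF deriv] that assms(1) by (simp add: has_field_derivative_def subset_eq)
  then obtain \<xi> where "\<xi> \<in> {s<..<t}" "g t - g s = g' \<xi> * (t - s)"
    using mvt_simple[OF \<open>s < t\<close>, of g "\<lambda>\<tau> h. g' \<tau> * h"] by auto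
  then show ?thesis
    using bound[of \<xi>] by (simp add: mult_right_mono)
qed simp

lemma increment_ge_of_deriv_ge:
  fixes g g' :: "real \<Rightarrow> real"
  assumes "0 \<le> s" "s \<le> t"
    and deriv: "\<And>\<tau>. 0 \<le> \<tau> \<Longrightarrow> (g has_real_derivative g' \<tau>) (at \<tau> within {0..})"
    and bound: "\<And>\<tau>. s < \<tau> \<Longrightarrow> \<tau> < t \<Longrightarrow> c \<le> g' \<tau>"
  shows "c * (t - s) \<le> g t - g s"
proof -
  have "- g t - - g s \<le> - c * (t - s)"
    by (rule increment_le_of_deriv_le[OF assms(1,2)]) (use deriv bound in \<open>auto intro: DERIV_minus\<close>)
  then show ?thesis by simp
qed

lemma antitone_of_deriv_nonpos:
  fixes g g' :: "real \<Rightarrow> real"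
  assumes deriv: "\<And>\<tau>. 0 \<le> \<tau> \<Longrightarrow> (g has_real_derivative g' \<tau>) (at \<tau> within {0..})"
    and nonpos: "\<And>\<tau>. 0 \<le> \<tau> \<Longrightarrow> g' \<tau> \<le> 0"
    and "0 \<le> s" "s \<le> t"
  shows "g t \<le> g s"
  using increment_le_of_deriv_le[OF assms(3,4) deriv, of 0] nonpos assms(3) by force

lemma antitone_tail_oscillation:
  fixes V :: "real \<Rightarrow> real"
  assumes antitone: "\<And>s t. 0 \<le> s \<Longrightarrow> s \<le> t \<Longrightarrow> V t \<le> V s"
    and nonneg: "\<And>t. 0 \<le> t \<Longrightarrow> 0 \<le> V t"
    and "0 < \<gamma>"
  obtains T where "0 \<le> T" and "\<And>s t. T \<le> s \<Longrightarrow> s \<le> t \<Longrightarrow> V s - V t < \<gamma>"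
proof -
  define L where "L = Inf (V ` {0..})"
  have bdd: "bdd_below (V ` {0..})"
    using nonneg by (auto intro!: bdd_belowI[of _ 0])
  have L_le: "L \<le> V t" if "0 \<le> t" for t
    unfolding L_def using bdd that by (auto intro!: cInf_lower)
  obtain T where T: "0 \<le> T" "V T < L + \<gamma>"
    using cInf_less_iff[of "V ` {0..}" "L + \<gamma>"] bdd \<open>0 < \<gamma>\<close> unfolding L_def by auto
  show thesis
  proof (rule that[OF T(1)])
    fix s t assume "T \<le> s" "s \<le> t"
    then show "V s - V t < \<gamma>"
      using antitone[of T s] L_le[of t] T by linarith
  qed
qed

lemma dissipation_tendsto_zero:
  fixes V V' g g' :: "real \<Rightarrow> real"
  assumes V_deriv: "\<And>t. 0 \<le> t \<Longrightarrow> (V has_real_derivative V' t) (at t within {0..})"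
    and V_dissip: "\<And>t. 0 \<le> t \<Longrightarrow> V' t \<le> - g t"
    and V_nonneg: "\<And>t. 0 \<le> t \<Longrightarrow> 0 \<le> V t"
    and g_deriv: "\<And>t. 0 \<le> t \<Longrightarrow> (g has_real_derivative g' t) (at t within {0..})"
    and g'_lower: "\<And>t. 0 \<le> t \<Longrightarrow> - L \<le> g' t"
    and g_nonneg: "\<And>t. 0 \<le> t \<Longrightarrow> 0 \<le> g t"
  shows "(g \<longlongrightarrow> 0) at_top"
proof (rule order_tendstoI)
  fix a :: real assume "a < 0"
  then show "\<forall>\<^sub>F t in at_top. a < g t"
    using g_nonneg unfolding eventually_at_top_linorder by (meson less_le_trans)
next
  fix \<epsilon> :: real assume "0 < \<epsilon>"
  define \<eta> where "\<eta> = \<epsilon> / (2 * (\<bar>L\<bar> + 1))"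
  have "0 < \<eta>" unfolding \<eta>_def using \<open>0 < \<epsilon>\<close> by simp
  have antitone: "V t \<le> V s" if "0 \<le> s" "s \<le> t" for s t
    using antitone_of_deriv_nonpos[OF V_deriv _ that] V_dissip g_nonneg by force
  have "0 < \<epsilon> * \<eta> / 2"
    using \<open>0 < \<epsilon>\<close> \<open>0 < \<eta>\<close> by simp
  obtain T where T: "0 \<le> T" "\<And>s t. T \<le> s \<Longrightarrow> s \<le> t \<Longrightarrow> V s - V t < \<epsilon> * \<eta> / 2"
    using antitone_tail_oscillation[of V "\<epsilon> * \<eta> / 2", OF antitone V_nonneg \<open>0 < \<epsilon> * \<eta> / 2\<close>]
    by blast
  have "g t < \<epsilon>" if "T \<le> t" for t
  proof (rule ccontr)
    assume "\<not> g t < \<epsilon>"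
    have "0 \<le> t" using that T(1) by simp
    have g_large: "\<epsilon> / 2 \<le> g \<tau>" if "t \<le> \<tau>" "\<tau> \<le> t + \<eta>" for \<tau>
    proof -
      have "- L * (\<tau> - t) \<le> g \<tau> - g t"
        using increment_ge_of_deriv_ge[OF \<open>0 \<le> t\<close> that(1) g_deriv g'_lower] \<open>0 \<le> t\<close> by simp
      moreover have "L * (\<tau> - t) \<le> \<bar>L\<bar> * (\<tau> - t)"
        using that by (intro mult_right_mono) auto
      moreover have "\<bar>L\<bar> * (\<tau> - t) \<le> (\<bar>L\<bar> + 1) * \<eta>"
        using that \<open>0 < \<eta>\<close> by (intro mult_mono) auto
      moreover have "(\<bar>L\<bar> + 1) * \<eta> = \<epsilon> / 2"
        unfolding \<eta>_def using abs_ge_zero[of L] by (simp add: field_simps)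
      ultimately show ?thesis
        using \<open>\<not> g t < \<epsilon>\<close> by linarith
    qed
    have "V (t + \<eta>) - V t \<le> - (\<epsilon> / 2) * (t + \<eta> - t)"
    proof (rule increment_le_of_deriv_le[OF \<open>0 \<le> t\<close> _ V_deriv])
      show "t \<le> t + \<eta>" using \<open>0 < \<eta>\<close> by simp
      fix \<tau> assume "t < \<tau>" "\<tau> < t + \<eta>"
      then show "V' \<tau> \<le> - (\<epsilon> / 2)"
        using V_dissip[of \<tau>] g_large[of \<tau>] \<open>0 \<le> t\<close> by simp
    qed
    then show False
      using T(2)[of t "t + \<eta>"] that \<open>0 < \<eta>\<close> by simp
  qed
  then show "\<forall>\<^sub>F t in at_top. g t < \<epsilon>"
    by (auto simp: eventually_at_top_linorder)
qed

lemma stays_below_of_deriv_neg_above: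
  fixes y y' :: "real \<Rightarrow> real"
  assumes "0 \<le> t\<^sub>0"
    and deriv: "\<And>t. 0 \<le> t \<Longrightarrow> (y has_real_derivative y' t) (at t within {0..})"
    and neg: "\<And>t. t\<^sub>0 \<le> t \<Longrightarrow> c < y t \<Longrightarrow> y' t < 0"
    and "y t\<^sub>0 \<le> c" "t\<^sub>0 \<le> t"
  shows "y t \<le> c"
proof (rule ccontr)
  assume "\<not> y t \<le> c"
  have cont: "continuous_on {t\<^sub>0..t} y"
    by (rule DERIV_continuous_on[OF DERIV_subset[OF deriv]]) (use \<open>0 \<le> t\<^sub>0\<close> in auto)
  obtain s where s: "s \<in> {t\<^sub>0..t}" "\<And>\<tau>. \<tau> \<in> {t\<^sub>0..t} \<Longrightarrow> y \<tau> \<le> y s"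
    using continuous_attains_sup[OF compact_Icc _ cont] \<open>t\<^sub>0 \<le> t\<close> by auto
  have "y t \<le> y s"
    using s(2)[of t] \<open>t\<^sub>0 \<le> t\<close> by simp
  then have "c < y s"
    using \<open>\<not> y t \<le> c\<close> by simp
  then have "t\<^sub>0 < s"
    using s(1) \<open>y t\<^sub>0 \<le> c\<close> by (cases "s = t\<^sub>0") auto
  obtain r where "0 < r" and r: "\<And>h. 0 < h \<Longrightarrow> s - h \<in> {0..} \<Longrightarrow> h < r \<Longrightarrow> y s < y (s - h)"
    using has_real_derivative_neg_dec_left[OF deriv neg[OF _ \<open>c < y s\<close>]] s(1) \<open>0 \<le> t\<^sub>0\<close> by auto
  define h where "h = min (r / 2) ((s - t\<^sub>0) / 2)"
  have "0 < h" "h < r"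
    unfolding h_def using \<open>0 < r\<close> \<open>t\<^sub>0 < s\<close> by auto
  have "h \<le> (s - t\<^sub>0) / 2"
    unfolding h_def by (rule min.cobounded2)
  then have "t\<^sub>0 \<le> s - h"
    using \<open>t\<^sub>0 < s\<close> by (simp add: field_simps)
  then have "y s < y (s - h)"
    using r \<open>0 < h\<close> \<open>h < r\<close> \<open>0 \<le> t\<^sub>0\<close> by simp
  moreover have "y (s - h) \<le> y s"
    using s \<open>0 < h\<close> \<open>t\<^sub>0 \<le> s - h\<close> by simp
  ultimately show False by simp
qed

lemma eventually_le_of_deriv_le_neg_above:
  fixes y y' :: "real \<Rightarrow> real"
  assumes "0 \<le> T" "0 < \<kappa>"
    and y_deriv: "\<And>t. 0 \<le> t \<Longrightarrow> (y has_real_derivative y' t) (at t within {0..})"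
    and y_nonneg: "\<And>t. 0 \<le> t \<Longrightarrow> 0 \<le> y t"
    and y_le: "\<And>t. 0 \<le> t \<Longrightarrow> y t \<le> Y"
    and y'_neg: "\<And>t. T \<le> t \<Longrightarrow> c \<le> y t \<Longrightarrow> y' t \<le> - \<kappa>"
  shows "\<forall>\<^sub>F t in at_top. y t \<le> c"
proof -
  have "\<exists>t\<^sub>1. T \<le> t\<^sub>1 \<and> y t\<^sub>1 \<le> c"
  proof (rule ccontr)
    assume "\<nexists>t\<^sub>1. T \<le> t\<^sub>1 \<and> y t\<^sub>1 \<le> c"
    then have above: "c < y t" if "T \<le> t" for t
      using that by force
    define t where "t = T + (Y + 1) / \<kappa>"
    have "T \<le> t"
      unfolding t_def using \<open>0 < \<kappa>\<close> y_nonneg[of T] y_le[of T] \<open>0 \<le> T\<close> by simp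
    have "y t - y T \<le> - \<kappa> * (t - T)"
      by (rule increment_le_of_deriv_le[OF \<open>0 \<le> T\<close> \<open>T \<le> t\<close> y_deriv])
        (use y'_neg above in \<open>auto simp: less_imp_le\<close>)
    moreover have "- \<kappa> * (t - T) = - (Y + 1)"
      unfolding t_def using \<open>0 < \<kappa>\<close> by simp
    ultimately show False
      using y_nonneg[of t] y_le[of T] \<open>0 \<le> T\<close> \<open>T \<le> t\<close> by simp
  qed
  then obtain t\<^sub>1 where "T \<le> t\<^sub>1" "y t\<^sub>1 \<le> c" by blast
  have "y t \<le> c" if "t\<^sub>1 \<le> t" for t
  proof (rule stays_below_of_deriv_neg_above[OF _ y_deriv _ \<open>y t\<^sub>1 \<le> c\<close> that])
    show "0 \<le> t\<^sub>1" using \<open>0 \<le> T\<close> \<open>T \<le> t\<^sub>1\<close> by simp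
    fix \<tau> assume "t\<^sub>1 \<le> \<tau>" "c < y \<tau>"
    then show "y' \<tau> < 0"
      using y'_neg[of \<tau>] \<open>T \<le> t\<^sub>1\<close> \<open>0 < \<kappa>\<close> by simp
  qed
  then show ?thesis
    unfolding eventually_at_top_linorder by blast
qed

lemma decay_tendsto_zero:
  fixes y y' z :: "real \<Rightarrow> real"
  assumes "0 < a"
    and y_deriv: "\<And>t. 0 \<le> t \<Longrightarrow> (y has_real_derivative y' t) (at t within {0..})"
    and y'_le: "\<And>t. 0 \<le> t \<Longrightarrow> y' t \<le> - a * y t + z t"
    and y_nonneg: "\<And>t. 0 \<le> t \<Longrightarrow> 0 \<le> y t"
    and y_le: "\<And>t. 0 \<le> t \<Longrightarrow> y t \<le> Y"
    and z_nonneg: "\<And>t. 0 \<le> t \<Longrightarrow> 0 \<le> z t"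
    and yz: "((\<lambda>t. y t * z t) \<longlongrightarrow> 0) at_top"
  shows "(y \<longlongrightarrow> 0) at_top"
proof (rule order_tendstoI)
  fix e :: real assume "e < 0"
  then show "\<forall>\<^sub>F t in at_top. e < y t"
    using y_nonneg unfolding eventually_at_top_linorder by (meson less_le_trans)
next
  fix e :: real assume "0 < e"
  define c where "c = e / 2"
  define \<kappa> where "\<kappa> = a * c / 2"
  have "0 < c" "0 < \<kappa>"
    unfolding c_def \<kappa>_def using \<open>0 < e\<close> \<open>0 < a\<close> by auto
  have "\<forall>\<^sub>F t in at_top. y t * z t < \<kappa> * c"
    using order_tendstoD(2)[OF yz] \<open>0 < c\<close> \<open>0 < \<kappa>\<close> by simp
  then obtain T where "0 \<le> T" and T: "\<And>t. T \<le> t \<Longrightarrow> y t * z t < \<kappa> * c"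
    unfolding eventually_at_top_linorder by (metis order.trans linorder_le_cases)
  text \<open>Above level \<open>c\<close> the product bound gives \<open>z < \<kappa>\<close>, so \<open>y' \<le> - a c + \<kappa> = - \<kappa>\<close>.\<close>
  have "y' t \<le> - \<kappa>" if "T \<le> t" "c \<le> y t" for t
  proof -
    have "0 \<le> t" using that \<open>0 \<le> T\<close> by simp
    have "c * z t \<le> y t * z t"
      using that z_nonneg[OF \<open>0 \<le> t\<close>] by (simp add: mult_right_mono)
    then have "c * z t < c * \<kappa>"
      using T[OF that(1)] by (simp add: mult.commute)
    then have "z t < \<kappa>"
      using \<open>0 < c\<close> by simp
    moreover have "a * c \<le> a * y t"
      using that \<open>0 < a\<close> by simp
    ultimately show ?thesis
      using y'_le[OF \<open>0 \<le> t\<close>] unfolding \<kappa>_def by linarith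
  qed
  then have "\<forall>\<^sub>F t in at_top. y t \<le> c"
    using eventually_le_of_deriv_le_neg_above[OF \<open>0 \<le> T\<close> \<open>0 < \<kappa>\<close> y_deriv y_nonneg y_le] by blast
  then show "\<forall>\<^sub>F t in at_top. y t < e"
    by (rule eventually_mono) (use \<open>0 < e\<close> in \<open>simp add: c_def\<close>)
qed

lemma has_real_derivative_vec_nth:
  assumes "(x has_vector_derivative x') F"
  shows "((\<lambda>t. x t $ i) has_real_derivative x' $ i) F"
  using bounded_linear.has_vector_derivative[OF bounded_linear_vec_nth assms]
  by (simp add: has_real_derivative_iff_has_vector_derivative)

lemma sis_field_nth:
  "sis_field d h B x $ i = - (d$i + h i (x$i)) * x$i + (1 - x$i) * (B *v x)$i"
  by (simp add: sis_field_def matrix_vector_mult_def)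

lemma Xi_nth: "x \<in> Xi \<Longrightarrow> 0 \<le> x$i \<and> x$i \<le> 1"
  by (simp add: Xi_def)

lemma infection_nonneg:
  assumes "\<And>i j. 0 \<le> B$i$j" "x \<in> Xi"
  shows "0 \<le> (B *v x)$i"
  using assms Xi_nth[OF assms(2)] by (auto simp: matrix_vector_mult_def intro!: sum_nonneg)

lemma infection_le_row_sum:
  assumes "\<And>i j. 0 \<le> B$i$j" "x \<in> Xi"
  shows "(B *v x)$i \<le> (\<Sum>j\<in>UNIV. B$i$j)"
  unfolding matrix_vector_mult_def
  using assms Xi_nth[OF assms(2)] by (auto intro!: sum_mono simp: mult_left_le)

lemma sis_field_weighted_sum_le:
  fixes v :: "real^'n"
  assumes sub: "\<And>k. (v v* B)$k \<le> d$k * v$k" and v_nonneg: "\<And>i. 0 \<le> v$i"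
    and h_nonneg: "\<forall>i. \<forall>y\<in>{0..1}. h i y \<ge> 0" and y: "y \<in> Xi"
  shows "(\<Sum>i\<in>UNIV. v$i * sis_field d h B y $ i) \<le> - (\<Sum>i\<in>UNIV. v$i * (y$i * (B *v y)$i))"
proof -
  have "v$i * sis_field d h B y $ i \<le> v$i * (B *v y)$i - d$i * v$i * y$i - v$i * (y$i * (B *v y)$i)" for i
  proof -
    have "0 \<le> v$i * (h i (y$i) * y$i)"
      using h_nonneg v_nonneg Xi_nth[OF y] by simp
    then show ?thesis
      by (simp add: sis_field_nth algebra_simps)
  qed
  then have "(\<Sum>i\<in>UNIV. v$i * sis_field d h B y $ i)
      \<le> (\<Sum>i\<in>UNIV. v$i * (B *v y)$i) - (\<Sum>i\<in>UNIV. d$i * v$i * y$i) - (\<Sum>i\<in>UNIV. v$i * (y$i * (B *v y)$i))"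
    by (auto intro: sum_mono simp flip: sum_subtractf)
  moreover have "(\<Sum>i\<in>UNIV. v$i * (B *v y)$i) \<le> (\<Sum>i\<in>UNIV. d$i * v$i * y$i)"
  proof -
    have "(\<Sum>i\<in>UNIV. v$i * (B *v y)$i) = (\<Sum>i\<in>UNIV. (v v* B)$i * y$i)"
      using dot_lmul_matrix[of v B y] by (simp add: inner_vec_def)
    also have "\<dots> \<le> (\<Sum>i\<in>UNIV. d$i * v$i * y$i)"
      using sub Xi_nth[OF y] by (intro sum_mono mult_right_mono) auto
    finally show ?thesis .
  qed
  ultimately show ?thesis by linarith
qed

lemma sis_equilibria:
  fixes v :: "real^'n"
  assumes sub: "\<And>k. (v v* B)$k \<le> d$k * v$k" and v_pos: "\<And>i. 0 < v$i"
    and d_pos: "\<forall>i. d $ i > 0" and B_nonneg: "\<And>i j. 0 \<le> B$i$j"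
    and h_nonneg: "\<forall>i. \<forall>y\<in>{0..1}. h i y \<ge> 0"
  shows "{x \<in> Xi. sis_field d h B x = 0} = {0}"
proof
  show "{0} \<subseteq> {x \<in> Xi. sis_field d h B x = 0}"
    by (auto simp: Xi_def sis_field_def vec_eq_iff)
  show "{x \<in> Xi. sis_field d h B x = 0} \<subseteq> {0}"
  proof
    fix y assume "y \<in> {x \<in> Xi. sis_field d h B x = 0}"
    then have y: "y \<in> Xi" and f0: "sis_field d h B y = 0" by auto
    have terms_nonneg: "\<forall>i\<in>UNIV. 0 \<le> v$i * (y$i * (B *v y)$i)"
      using v_pos Xi_nth[OF y] infection_nonneg[OF B_nonneg y] by (simp add: less_imp_le)
    have "(\<Sum>i\<in>UNIV. v$i * (y$i * (B *v y)$i)) \<le> 0"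
      using sis_field_weighted_sum_le[OF sub less_imp_le[OF v_pos] h_nonneg y] f0 by simp
    then have "(\<Sum>i\<in>UNIV. v$i * (y$i * (B *v y)$i)) = 0"
      using terms_nonneg by (simp add: order_antisym sum_nonneg)
    then have "\<forall>i\<in>UNIV. v$i * (y$i * (B *v y)$i) = 0"
      using terms_nonneg sum_nonneg_eq_0_iff[of UNIV "\<lambda>i. v$i * (y$i * (B *v y)$i)"] by simp
    then have product_zero: "y$i * (B *v y)$i = 0" for i
      using v_pos[of i] by (metis UNIV_I mult_eq_0_iff order_less_irrefl)
    have "y$i = 0" for i
    proof -
      have "(d$i + h i (y$i)) * y$i = (1 - y$i) * (B *v y)$i"
        using arg_cong[OF f0, of "\<lambda>x. x $ i"] by (simp add: sis_field_nth algebra_simps)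
      then have "(d$i + h i (y$i)) * (y$i * y$i) = (1 - y$i) * (y$i * (B *v y)$i)"
        by (metis mult.assoc mult.left_commute)
      moreover have "0 < d$i + h i (y$i)"
        using d_pos h_nonneg Xi_nth[OF y, of i] by (simp add: add_pos_nonneg)
      ultimately show ?thesis
        using product_zero[of i] by simp
    qed
    then show "y \<in> {0}" by (simp add: vec_eq_iff)
  qed
qed

lemma sis_field_bounded:
  assumes d_pos: "\<forall>i. d $ i > 0" and B_nonneg: "\<And>i j. 0 \<le> B$i$j"
    and h_nonneg: "\<forall>i. \<forall>y\<in>{0..1}. h i y \<ge> 0" and h_bounded: "\<forall>i. bounded (h i ` {0..1})"
  obtains K where "\<And>y i. y \<in> Xi \<Longrightarrow> \<bar>sis_field d h B y $ i\<bar> \<le> K"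
proof -
  obtain H where H: "\<And>i s. s \<in> {0..1} \<Longrightarrow> h i s \<le> H i"
    using h_bounded unfolding bounded_real by (metis abs_le_D1 imageI)
  have H_nonneg: "0 \<le> H i" for i
    using H[of 0 i] h_nonneg by (meson atLeastAtMost_iff order_trans zero_le_one order_refl)
  define K where "K = (\<Sum>i\<in>UNIV. d$i + H i + (\<Sum>j\<in>UNIV. B$i$j))"
  have "\<bar>sis_field d h B y $ i\<bar> \<le> K" if y: "y \<in> Xi" for y i
  proof -
    have y_i: "0 \<le> y$i" "y$i \<le> 1"
      using Xi_nth[OF y] by auto
    have h_i: "0 \<le> h i (y$i)" "h i (y$i) \<le> H i"
      using h_nonneg H y_i by auto
    have "(d$i + h i (y$i)) * y$i \<le> d$i + h i (y$i)"
      using y_i h_i d_pos mult_left_le[of "y$i" "d$i + h i (y$i)"] by (simp add: add_pos_nonneg less_imp_le)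
    then have "(d$i + h i (y$i)) * y$i \<le> d$i + H i"
      using h_i by linarith
    moreover have "0 \<le> (d$i + h i (y$i)) * y$i"
      using y_i h_i d_pos by (simp add: add_pos_nonneg less_imp_le)
    moreover have "(1 - y$i) * (B *v y)$i \<le> (\<Sum>j\<in>UNIV. B$i$j)"
      using y_i infection_nonneg[OF B_nonneg y] infection_le_row_sum[OF B_nonneg y, of i]
        mult_left_le_one_le[of "(B *v y)$i" "1 - y$i"] by simp
    moreover have "0 \<le> (1 - y$i) * (B *v y)$i"
      using y_i infection_nonneg[OF B_nonneg y] by simp
    ultimately have "\<bar>sis_field d h B y $ i\<bar> \<le> d$i + H i + (\<Sum>j\<in>UNIV. B$i$j)"
      unfolding sis_field_nth mult_minus_left abs_le_iff using h_i d_pos[rule_format, of i]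
      by (intro conjI) linarith+
    also have "\<dots> \<le> K"
    proof -
      have "0 \<le> d$j + H j + (\<Sum>k\<in>UNIV. B$j$k)" for j
        using d_pos[rule_format, of j] H_nonneg[of j] sum_nonneg[of UNIV "\<lambda>k. B$j$k"] B_nonneg
        by simp
      then show ?thesis
        unfolding K_def by (intro member_le_sum) auto
    qed
    finally show ?thesis .
  qed
  then show thesis by (rule that)
qed

context
  fixes d v :: "real^'n" and B :: "real^'n^'n" and h :: "'n \<Rightarrow> real \<Rightarrow> real"
    and x :: "real \<Rightarrow> real^'n"
  assumes sub: "\<And>k. (v v* B)$k \<le> d$k * v$k" and v_pos: "\<And>i. 0 < v$i"
    and d_pos: "\<forall>i. d $ i > 0" and B_nonneg: "\<And>i j. 0 \<le> B$i$j"
    and h_nonneg: "\<forall>i. \<forall>y\<in>{0..1}. h i y \<ge> 0" and h_bounded: "\<forall>i. bounded (h i ` {0..1})"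
    and x_Xi: "\<And>t. 0 \<le> t \<Longrightarrow> x t \<in> Xi"
    and x_deriv: "\<And>t. 0 \<le> t \<Longrightarrow> (x has_vector_derivative sis_field d h B (x t)) (at t within {0..})"
begin

lemma sis_trajectory_nth_bounds: "0 \<le> t \<Longrightarrow> 0 \<le> x t $ i \<and> x t $ i \<le> 1"
  using Xi_nth x_Xi by blast

lemma sis_trajectory_nth_deriv:
  "0 \<le> t \<Longrightarrow> ((\<lambda>t. x t $ i) has_real_derivative sis_field d h B (x t) $ i) (at t within {0..})"
  by (rule has_real_derivative_vec_nth[OF x_deriv])

lemma sis_trajectory_infection_deriv:
  "0 \<le> t \<Longrightarrow> ((\<lambda>t. (B *v x t)$i) has_real_derivative (B *v sis_field d h B (x t))$i) (at t within {0..})"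
  unfolding matrix_vector_mult_def vec_lambda_beta
  by (intro DERIV_sum DERIV_cmult sis_trajectory_nth_deriv)

lemma sis_trajectory_pressure_deriv_lower:
  obtains L where "\<And>t. 0 \<le> t \<Longrightarrow>
    - L \<le> sis_field d h B (x t) $ k * (B *v x t)$k + x t $ k * (B *v sis_field d h B (x t))$k"
proof -
  define F where "F t = sis_field d h B (x t)" for t
  obtain K where K: "\<And>t i. 0 \<le> t \<Longrightarrow> \<bar>F t $ i\<bar> \<le> K"
    using sis_field_bounded[OF d_pos B_nonneg h_nonneg h_bounded] x_Xi unfolding F_def by metis
  define \<beta> where "\<beta> = (\<Sum>j\<in>UNIV. B$k$j)"
  have "- (2 * K * \<beta>) \<le> F t $ k * (B *v x t)$k + x t $ k * (B *v F t)$k" if "0 \<le> t" for t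
  proof -
    have "\<bar>F t $ k * (B *v x t)$k\<bar> \<le> K * \<beta>"
      unfolding abs_mult \<beta>_def using K[OF that]
        infection_nonneg[OF B_nonneg x_Xi[OF that]] infection_le_row_sum[OF B_nonneg x_Xi[OF that]]
      by (intro mult_mono) (auto intro: order_trans[OF abs_ge_zero])
    moreover have "\<bar>(B *v F t)$k\<bar> \<le> K * \<beta>"
    proof -
      have "\<bar>(B *v F t)$k\<bar> \<le> (\<Sum>j\<in>UNIV. B$k$j * K)"
        unfolding matrix_vector_mult_def vec_lambda_beta
        by (rule order_trans[OF sum_abs sum_mono]) (simp add: abs_mult B_nonneg K that mult_left_mono)
      then show ?thesis
        by (simp add: \<beta>_def sum_distrib_left mult.commute)
    qed
    then have "\<bar>x t $ k * (B *v F t)$k\<bar> \<le> K * \<beta>"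
      unfolding abs_mult using sis_trajectory_nth_bounds[OF that, of k]
        mult_left_le_one_le[of "\<bar>(B *v F t)$k\<bar>" "x t $ k"]
      by simp
    ultimately show ?thesis
      by (simp add: abs_le_iff)
  qed
  then show thesis
    unfolding F_def by (rule that)
qed

lemma sis_trajectory_pressure_tendsto_zero: "((\<lambda>t. x t $ k * (B *v x t)$k) \<longlongrightarrow> 0) at_top"
proof -
  define F where "F t = sis_field d h B (x t)" for t
  obtain L where L: "\<And>t. 0 \<le> t \<Longrightarrow> - L \<le> F t $ k * (B *v x t)$k + x t $ k * (B *v F t)$k"
    using sis_trajectory_pressure_deriv_lower unfolding F_def by blast
  have x_nth: "0 \<le> x t $ i" "x t $ i \<le> 1" if "0 \<le> t" for t i
    using sis_trajectory_nth_bounds[OF that] by auto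
  show ?thesis
  proof (rule dissipation_tendsto_zero[where V="\<lambda>t. (\<Sum>i\<in>UNIV. v$i * x t $ i) / v$k"
        and V'="\<lambda>t. (\<Sum>i\<in>UNIV. v$i * F t $ i) / v$k" and L=L
        and g'="\<lambda>t. F t $ k * (B *v x t)$k + x t $ k * (B *v F t)$k"])
    fix t :: real assume "0 \<le> t"
    show "((\<lambda>t. (\<Sum>i\<in>UNIV. v$i * x t $ i) / v$k) has_real_derivative (\<Sum>i\<in>UNIV. v$i * F t $ i) / v$k)
        (at t within {0..})"
      unfolding F_def by (intro DERIV_cdivide DERIV_sum DERIV_cmult sis_trajectory_nth_deriv \<open>0 \<le> t\<close>)
    show "((\<lambda>t. x t $ k * (B *v x t)$k) has_real_derivative F t $ k * (B *v x t)$k + x t $ k * (B *v F t)$k)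
        (at t within {0..})"
      unfolding F_def using DERIV_mult[OF sis_trajectory_nth_deriv sis_trajectory_infection_deriv] \<open>0 \<le> t\<close>
      by (simp add: mult.commute)
    show "- L \<le> F t $ k * (B *v x t)$k + x t $ k * (B *v F t)$k"
      using L \<open>0 \<le> t\<close> .
    show "0 \<le> (\<Sum>i\<in>UNIV. v$i * x t $ i) / v$k"
      using v_pos x_nth[OF \<open>0 \<le> t\<close>] by (auto intro!: divide_nonneg_pos sum_nonneg simp: less_imp_le)
    show "0 \<le> x t $ k * (B *v x t)$k"
      using x_nth infection_nonneg[OF B_nonneg x_Xi] \<open>0 \<le> t\<close> by simp
    have "(\<Sum>i\<in>UNIV. v$i * F t $ i) \<le> - (\<Sum>i\<in>UNIV. v$i * (x t $ i * (B *v x t)$i))"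
      unfolding F_def by (rule sis_field_weighted_sum_le[OF sub less_imp_le[OF v_pos] h_nonneg x_Xi[OF \<open>0 \<le> t\<close>]])
    moreover have "v$k * (x t $ k * (B *v x t)$k) \<le> (\<Sum>i\<in>UNIV. v$i * (x t $ i * (B *v x t)$i))"
      using v_pos x_nth[OF \<open>0 \<le> t\<close>] infection_nonneg[OF B_nonneg x_Xi[OF \<open>0 \<le> t\<close>]]
      by (intro member_le_sum) (auto simp: less_imp_le)
    ultimately show "(\<Sum>i\<in>UNIV. v$i * F t $ i) / v$k \<le> - (x t $ k * (B *v x t)$k)"
      using v_pos[of k] by (simp add: divide_le_eq mult.commute)
  qed
qed

lemma sis_trajectory_tendsto_zero: "(x \<longlongrightarrow> 0) at_top"
proof (rule vec_tendstoI)
  fix k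
  have "((\<lambda>t. x t $ k) \<longlongrightarrow> 0) at_top"
  proof (rule decay_tendsto_zero[where a="d$k" and y'="\<lambda>t. sis_field d h B (x t) $ k"
        and z="\<lambda>t. (B *v x t)$k" and Y=1])
    fix t :: real assume "0 \<le> t"
    have x_nth: "0 \<le> x t $ k" "x t $ k \<le> 1"
      using sis_trajectory_nth_bounds[OF \<open>0 \<le> t\<close>] by auto
    have "0 \<le> h k (x t $ k) * x t $ k"
      using h_nonneg x_nth by simp
    moreover have "0 \<le> (B *v x t)$k"
      using infection_nonneg[OF B_nonneg x_Xi[OF \<open>0 \<le> t\<close>]] .
    ultimately show "sis_field d h B (x t) $ k \<le> - d$k * x t $ k + (B *v x t)$k"
      using x_nth unfolding sis_field_nth by (simp add: algebra_simps mult_left_le_one_le)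
  qed (use d_pos sis_trajectory_nth_deriv sis_trajectory_nth_bounds x_Xi infection_nonneg[OF B_nonneg]
      sis_trajectory_pressure_tendsto_zero in auto)
  then show "((\<lambda>t. x t $ k) \<longlongrightarrow> 0 $ k) at_top" by simp
qed

end

theorem theorem3:
  fixes d :: "real ^ 'n" and B :: "real ^ 'n ^ 'n" and h :: "'n \<Rightarrow> real \<Rightarrow> real"
  assumes n2: "CARD('n) \<ge> 2"
    and d_pos: "\<forall>i. d $ i > 0"
    and B_nonneg: "\<forall>i j. B $ i $ j \<ge> 0"
    and B_irred: "irreducible_mat B"
    and h_nonneg: "\<forall>i. \<forall>y\<in>{0..1}. h i y \<ge> 0"
    and h_bounded: "\<forall>i. bounded (h i ` {0..1})"
    and h_smooth: "\<forall>i. smooth_on {0..1} (h i)"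
    and h_mono: "\<forall>i. mono_on {0..1} (h i)"
    and h_zero: "\<forall>i. h i 0 = 0"
    and s_le: "spectral_abscissa (- diag_mat d + B) \<le> 0"
  shows "{x \<in> Xi. sis_field d h B x = 0} = {0}
    \<and> (\<forall>x :: real \<Rightarrow> real ^ 'n.
          x 0 \<in> Xi \<and> (\<forall>t\<ge>0. x t \<in> Xi) \<and>
          (\<forall>t\<ge>0. (x has_vector_derivative sis_field d h B (x t)) (at t within {0..}))
          \<longrightarrow> (x \<longlongrightarrow> 0) at_top)"
proof -
  obtain v where v_pos: "\<And>i. 0 < v$i" and sub: "\<And>k. (v v* B)$k \<le> d$k * v$k"
    using positive_left_subinvariant_vector[OF B_nonneg[rule_format] B_irred s_le] by blast
  have "{x \<in> Xi. sis_field d h B x = 0} = {0}"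
    by (rule sis_equilibria[OF sub v_pos d_pos B_nonneg[rule_format] h_nonneg])
  moreover have "(x \<longlongrightarrow> 0) at_top"
    if "\<forall>t\<ge>0. x t \<in> Xi"
      and "\<forall>t\<ge>0. (x has_vector_derivative sis_field d h B (x t)) (at t within {0..})"
    for x :: "real \<Rightarrow> real ^ 'n"
    using sis_trajectory_tendsto_zero[OF sub v_pos d_pos B_nonneg[rule_format] h_nonneg h_bounded] that
    by blast
  ultimately show ?thesis
    by blast
qed

end
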